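(* Let $K$ be a field of characteristic zero and $n\ge1$, and regard $\mathbb{S}_n\subseteq{\rm End}_K(P_n)$. Then (1) $1+F_n\subseteq\mathcal{C}(P_n)_0$, and (2) $\mathbb{S}_n^*+F_n\subseteq\mathcal{C}(P_n)_0$.
   Context: $\mathbb{S}_n$ is the $K$-algebra generated by $x_1,\dots,x_n,y_1,\dots,y_n$ with defining relations $y_ix_i=1$ and $[x_i,y_j]=[x_i,x_j]=[y_i,y_j]=0$ for $i\ne j$; it acts faithfully on $P_n=K[x_1,\dots,x_n]$ by $x_i*x^\alpha=x^{\alpha+e_i}$, $y_i*x^\alpha=x^{\alpha-e_i}$ if $\alpha_i>0$ and $0$ otherwise. $F_n$ is the ideal of $\mathbb{S}_n$ spanned by all $\prod_{i=1}^n(x_i^{\alpha_i}y_i^{\beta_i}-x_i^{\alpha_i+1}y_i^{\beta_i+1})$, $\alpha,\beta\in\mathbb{N}^n$. $\mathbb{S}_n^*$ is the group of units of $\mathbb{S}_n$. $\mathcal{C}(P_n)_0$ is the set of $K$-linear maps $\varphi:P_n\to P_n$ with finite-dimensional kernel and cokernel and index ${\rm ind}(\varphi)=\dim\ker\varphi-\dim{\rm coker}\,\varphi=0$. *)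

theory Defs
  imports Complex_Main "HOL-Library.Poly_Mapping"
begin

(* P_n = K[x_i : i \<in> 'n]: finitely supported coefficient functions on monomials
   x^\<alpha>, \<alpha> :: 'n \<Rightarrow> nat.  The finite index type 'n plays the role of {1..n}
   (types are nonempty, so n \<ge> 1). *)
type_synonym ('n, 'k) Pn = "('n \<Rightarrow> nat) \<Rightarrow>\<^sub>0 'k"

definition scal :: "'k::field \<Rightarrow> ('n, 'k) Pn \<Rightarrow> ('n, 'k) Pn" where
  "scal c p = Poly_Mapping.map (\<lambda>a. c * a) p"

(* action of x_i:  x_i * x^\<alpha> = x^(\<alpha>+e_i) *)
definition Xop :: "'n \<Rightarrow> ('n, 'k::field) Pn \<Rightarrow> ('n, 'k) Pn" where
  "Xop i p = Abs_poly_mapping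
     (\<lambda>\<alpha>. if 0 < \<alpha> i then Poly_Mapping.lookup p (\<alpha>(i := \<alpha> i - 1)) else 0)"

(* action of y_i:  y_i * x^\<alpha> = x^(\<alpha>-e_i) if \<alpha>_i > 0, else 0 *)
definition Yop :: "'n \<Rightarrow> ('n, 'k::field) Pn \<Rightarrow> ('n, 'k) Pn" where
  "Yop i p = Abs_poly_mapping (\<lambda>\<alpha>. Poly_Mapping.lookup p (\<alpha>(i := Suc (\<alpha> i))))"

inductive_set Sn :: "(('n, 'k::field) Pn \<Rightarrow> ('n, 'k) Pn) set" where
  Sn_id: "id \<in> Sn"
| Sn_X: "Xop i \<in> Sn"
| Sn_Y: "Yop i \<in> Sn"
| Sn_add: "f \<in> Sn \<Longrightarrow> g \<in> Sn \<Longrightarrow> (\<lambda>p. f p + g p) \<in> Sn"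
| Sn_scal: "f \<in> Sn \<Longrightarrow> (\<lambda>p. scal c (f p)) \<in> Sn"
| Sn_comp: "f \<in> Sn \<Longrightarrow> g \<in> Sn \<Longrightarrow> f \<circ> g \<in> Sn"

definition Sn_units :: "(('n, 'k::field) Pn \<Rightarrow> ('n, 'k) Pn) set" where
  "Sn_units = {u \<in> Sn. \<exists>v \<in> Sn. u \<circ> v = id \<and> v \<circ> u = id}"

definition Ffactor :: "'n \<Rightarrow> nat \<Rightarrow> nat \<Rightarrow> ('n, 'k::field) Pn \<Rightarrow> ('n, 'k) Pn" where
  "Ffactor i a b = (\<lambda>p. (Xop i ^^ a) ((Yop i ^^ b) p)
                        - (Xop i ^^ Suc a) ((Yop i ^^ Suc b) p))"

(* the product over i of the factors (they commute pairwise) *)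
definition Fgen :: "('n::finite \<Rightarrow> nat) \<Rightarrow> ('n \<Rightarrow> nat) \<Rightarrow> ('n, 'k::field) Pn \<Rightarrow> ('n, 'k) Pn" where
  "Fgen \<alpha> \<beta> = Finite_Set.fold (\<lambda>i f. Ffactor i (\<alpha> i) (\<beta> i) \<circ> f) id UNIV"

inductive_set Fn :: "(('n::finite, 'k::field) Pn \<Rightarrow> ('n, 'k) Pn) set" where
  Fn_zero: "(\<lambda>p. 0) \<in> Fn"
| Fn_gen: "Fgen \<alpha> \<beta> \<in> Fn"
| Fn_add: "f \<in> Fn \<Longrightarrow> g \<in> Fn \<Longrightarrow> (\<lambda>p. f p + g p) \<in> Fn"
| Fn_scal: "f \<in> Fn \<Longrightarrow> (\<lambda>p. scal c (f p)) \<in> Fn"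

definition fin_dim :: "('n, 'k::field) Pn set \<Rightarrow> bool" where
  "fin_dim W \<longleftrightarrow> (\<exists>B. finite B \<and> Modules.module.span scal B = W)"

(* complements of the image of \<phi>; P_n / im \<phi> \<cong> W for any such W *)
definition is_coker_compl :: "(('n, 'k::field) Pn \<Rightarrow> ('n, 'k) Pn) \<Rightarrow> ('n, 'k) Pn set \<Rightarrow> bool" where
  "is_coker_compl \<phi> W \<longleftrightarrow> Modules.module.subspace scal W \<and> W \<inter> \<phi> ` UNIV = {0}
      \<and> (\<forall>p. \<exists>w\<in>W. \<exists>q. p = w + \<phi> q)"

definition ker :: "(('n, 'k::field) Pn \<Rightarrow> ('n, 'k) Pn) \<Rightarrow> ('n, 'k) Pn set" where
  "ker \<phi> = {p. \<phi> p = 0}"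

definition dim_ker :: "(('n, 'k::field) Pn \<Rightarrow> ('n, 'k) Pn) \<Rightarrow> nat" where
  "dim_ker \<phi> = Vector_Spaces.vector_space.dim scal (ker \<phi>)"

definition dim_coker :: "(('n, 'k::field) Pn \<Rightarrow> ('n, 'k) Pn) \<Rightarrow> nat" where
  "dim_coker \<phi> = Vector_Spaces.vector_space.dim scal (SOME W. is_coker_compl \<phi> W)"

definition C0 :: "(('n, 'k::field) Pn \<Rightarrow> ('n, 'k) Pn) set" where
  "C0 = {\<phi>. Vector_Spaces.linear scal scal \<phi>
          \<and> fin_dim (ker \<phi>)
          \<and> (\<exists>W. is_coker_compl \<phi> W \<and> fin_dim W)
          \<and> int (dim_ker \<phi>) - int (dim_coker \<phi>) = 0}"

end

theory Submission
  imports Defs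
begin

text \<open>Each generator of \<open>F\<^sub>n\<close> acts on \<open>P\<^sub>n\<close> as a matrix unit \<open>x\<^sup>\<beta> \<mapsto> x\<^sup>\<alpha>\<close>, so every
  \<open>f \<in> F\<^sub>n\<close> reads only finitely many coefficients and, being linear, takes values in the span
  \<open>V\<close> of finitely many monomials. For a unit \<open>u\<close>, write \<open>u + f = u (1 + g)\<close> with \<open>g = u\<^sup>-\<^sup>1 f\<close>, which
  has the same two properties; enlarging \<open>V\<close> we may assume \<open>g\<close> vanishes off \<open>V\<close> and maps into \<open>V\<close>.
  Then \<open>1 + g\<close> is the identity modulo \<open>V\<close> and restricts to an endomorphism of the
  finite-dimensional space \<open>V\<close>, so its kernel and cokernel are those of this restriction and
  rank--nullity gives index \<open>0\<close>; composing with the invertible \<open>u\<close> changes neither.\<close>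

section \<open>Complements and rank--nullity in arbitrary vector spaces\<close>

context vector_space
begin

lemma span_Int_span_eq_zero:
  assumes "independent B" "finite B" "S \<subseteq> B" "T \<subseteq> B" "S \<inter> T = {}"
    and "x \<in> span S" "x \<in> span T"
  shows "x = 0"
proof -
  have fS: "finite S" and fT: "finite T" using assms(2-4) finite_subset by blast+
  obtain c where c: "x = (\<Sum>v\<in>S. c v *s v)" using assms(6) span_finite[OF fS] by blast
  obtain d where d: "x = (\<Sum>v\<in>T. d v *s v)" using assms(7) span_finite[OF fT] by blast
  define e where "e v = (if v \<in> S then c v else - d v)" for v
  have "(\<Sum>v\<in>S \<union> T. e v *s v) = (\<Sum>v\<in>S. e v *s v) + (\<Sum>v\<in>T. e v *s v)"
    using fS fT assms(5) by (rule sum.union_disjoint)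
  also have "(\<Sum>v\<in>S. e v *s v) = x" unfolding c e_def by (intro sum.cong refl) simp
  also have "(\<Sum>v\<in>T. e v *s v) = - x"
    unfolding d e_def using assms(5) by (auto simp: sum_negf[symmetric] intro!: sum.cong)
  finally have "(\<Sum>v\<in>S \<union> T. e v *s v) = 0" by simp
  then have "\<forall>v\<in>S. e v = 0"
    using independentD[OF assms(1)] fS fT assms(3,4) by (meson Un_iff finite_UnI le_sup_iff)
  then show ?thesis unfolding c e_def by simp
qed

lemma subspace_finite_span:
  assumes "subspace S" "S \<subseteq> span F" "finite F"
  obtains B where "finite B" "span B = S"
proof -
  obtain B where B: "B \<subseteq> S" "independent B" "S \<subseteq> span B"
    using basis_exists by metis
  have "finite B"
    using independent_span_bound[OF assms(3) B(2)] B(1) assms(2) by (meson order_trans)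
  moreover have "span B = S" using span_subspace[OF B(1,3) assms(1)] .
  ultimately show thesis by (rule that)
qed

lemma dim_image_eq_inj:
  assumes "Vector_Spaces.linear scale scale f" and "inj_on f (span S)"
  shows "dim (f ` S) = dim S"
proof -
  interpret f: Vector_Spaces.linear scale scale f by fact
  obtain B where B: "B \<subseteq> S" "independent B" "S \<subseteq> span B" "card B = dim S"
    using basis_exists[of S] by metis
  have spanB: "span S = span B"
    unfolding span_eq using B(1,3) span_superset by blast
  then have inj: "inj_on f (span B)" using assms(2) by simp
  have "dim (f ` S) = dim (f ` span B)"
    by (metis spanB dim_span f.span_image)
  also have "\<dots> = dim (f ` B)"
    by (metis dim_span f.span_image)
  also have "\<dots> = card (f ` B)"
    using f.independent_injective_image[OF B(2) inj] by (rule dim_eq_card_independent)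
  also have "\<dots> = card B"
    using inj_on_subset[OF inj span_superset] by (rule card_image)
  finally show ?thesis using B(4) by simp
qed

lemma projection_along_complement:
  assumes R: "subspace R" and W: "subspace W" "W \<inter> R = {0}" "\<And>p. \<exists>w\<in>W. \<exists>r\<in>R. p = w + r"
  obtains \<pi> where "Vector_Spaces.linear scale scale \<pi>" "\<And>p. \<pi> p \<in> W" "\<And>p. p - \<pi> p \<in> R"
    "\<And>p w. w \<in> W \<Longrightarrow> p - w \<in> R \<Longrightarrow> \<pi> p = w"
proof -
  define \<pi> where "\<pi> p = (SOME w. w \<in> W \<and> p - w \<in> R)" for p
  have \<pi>: "\<pi> p \<in> W \<and> p - \<pi> p \<in> R" for p
  proof -
    obtain w r where "w \<in> W" "r \<in> R" "p = w + r" using W(3) by blast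
    then have "\<exists>w. w \<in> W \<and> p - w \<in> R" by (intro exI[of _ w]) simp
    then show ?thesis unfolding \<pi>_def by (rule someI_ex)
  qed
  have \<pi>_eq: "\<pi> p = w" if "w \<in> W" "p - w \<in> R" for p w
  proof -
    have "w - \<pi> p \<in> W" using W(1) that(1) \<pi> subspace_diff by blast
    moreover have "w - \<pi> p \<in> R" using subspace_diff[OF R, of "p - \<pi> p" "p - w"] \<pi> that(2) by simp
    ultimately have "w - \<pi> p = 0" using W(2) by blast
    then show ?thesis by simp
  qed
  have "Vector_Spaces.linear scale scale \<pi>"
    unfolding Vector_Spaces.linear_iff
  proof (intro conjI allI vector_space_axioms)
    show "\<pi> (x + y) = \<pi> x + \<pi> y" for x y
      using \<pi>[of x] \<pi>[of y] W(1) R subspace_add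
      by (intro \<pi>_eq) (auto simp: add_diff_add)
    show "\<pi> (c *s x) = c *s \<pi> x" for c x
      using \<pi>[of x] W(1) R subspace_scale
      by (intro \<pi>_eq) (auto simp: scale_right_diff_distrib[symmetric])
  qed
  then show thesis using that \<pi> \<pi>_eq by blast
qed

text \<open>The projection onto \<open>W\<close> along \<open>R\<close> maps any other complement \<open>W'\<close> of \<open>R\<close> isomorphically
  onto \<open>W\<close>.\<close>

lemma complement_dim_eq:
  assumes R: "subspace R" and W: "subspace W" "W \<inter> R = {0}" "\<And>p. \<exists>w\<in>W. \<exists>r\<in>R. p = w + r"
    and W': "subspace W'" "W' \<inter> R = {0}" "\<And>p. \<exists>w\<in>W'. \<exists>r\<in>R. p = w + r"
  shows "dim W = dim W'"
proof (rule projection_along_complement[OF R W])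
  fix \<pi> assume lin: "Vector_Spaces.linear scale scale \<pi>" and \<pi>: "\<And>p. \<pi> p \<in> W" "\<And>p. p - \<pi> p \<in> R"
    and \<pi>_eq: "\<And>p w. w \<in> W \<Longrightarrow> p - w \<in> R \<Longrightarrow> \<pi> p = w"
  interpret \<pi>: Vector_Spaces.linear scale scale \<pi> by (fact lin)
  have inj: "inj_on \<pi> (span W')"
  proof (rule inj_onI)
    fix a b assume "a \<in> span W'" "b \<in> span W'" "\<pi> a = \<pi> b"
    moreover have "span W' = W'" using W'(1) by simp
    ultimately have "a - b \<in> W'" "\<pi> (a - b) = 0"
      using subspace_diff[OF W'(1)] \<pi>.diff[of a b] by auto
    then have "a - b \<in> W' \<inter> R" using \<pi>(2)[of "a - b"] by simp
    then show "a = b" using W'(2) by simp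
  qed
  have img: "\<pi> ` W' = W"
  proof
    show "\<pi> ` W' \<subseteq> W" using \<pi>(1) by auto
    show "W \<subseteq> \<pi> ` W'"
    proof
      fix w assume "w \<in> W"
      obtain w' r where "w' \<in> W'" "r \<in> R" "w = w' + r" using W'(3) by blast
      then have "\<pi> w' = w" using \<pi>_eq[OF \<open>w \<in> W\<close>, of w'] R subspace_neg by fastforce
      then show "w \<in> \<pi> ` W'" using \<open>w' \<in> W'\<close> by blast
    qed
  qed
  show ?thesis using dim_image_eq_inj[OF lin inj] img by simp
qed

lemma rank_nullity:
  assumes V: "subspace V" "V \<subseteq> span F" "finite F" and f: "Vector_Spaces.linear scale scale f"
  shows "dim (f ` V) + dim (V \<inter> {x. f x = 0}) = dim V"
proof -
  interpret f: Vector_Spaces.linear scale scale f by (fact f)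
  let ?K = "V \<inter> {x. f x = 0}"
  obtain K where K: "K \<subseteq> ?K" "independent K" "?K \<subseteq> span K" "card K = dim ?K"
    using basis_exists by metis
  obtain B where B: "K \<subseteq> B" "B \<subseteq> V" "independent B" "V \<subseteq> span B"
    using maximal_independent_subset_extend[of K V] K(1,2) by blast
  have fB: "finite B" using independent_span_bound[OF V(3) B(3)] B(2) V(2) by blast
  have spanK: "span K = ?K"
    by (rule span_subspace[OF K(1,3)]) (intro subspace_inter V(1) f.subspace_kernel)
  have inj: "inj_on f (span (B - K))"
    unfolding f.inj_on_iff_eq_0[OF subspace_span]
  proof (intro ballI impI)
    fix x assume "x \<in> span (B - K)" "f x = 0"
    moreover from this have "x \<in> span K"
      using span_minimal[OF _ V(1), of "B - K"] B(2) spanK by auto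
    ultimately show "x = 0" using span_Int_span_eq_zero[OF B(3) fB, of "B - K" K] B(1) by blast
  qed
  have "f ` B \<subseteq> insert 0 (f ` (B - K))" using K(1) by auto
  then have "span (f ` B) \<subseteq> span (f ` (B - K))"
    by (metis span_insert_0 span_mono)
  then have image: "f ` V = span (f ` (B - K))"
    using span_subspace[OF B(2,4) V(1)] f.span_image span_mono[of "f ` (B - K)" "f ` B"] by auto
  have "dim (f ` V) = card (B - K)"
    unfolding image dim_span
    using f.independent_injective_image[OF independent_mono[OF B(3)] inj]
      card_image[OF inj_on_subset[OF inj span_superset]]
    by (simp add: dim_eq_card_independent)
  moreover have "dim V = card B" using basis_card_eq_dim[OF B(2,4,3)] by simp
  ultimately show ?thesis
    using K(4) card_Diff_subset[OF finite_subset[OF B(1) fB] B(1)] card_mono[OF fB B(1)] by simp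
qed

lemma exists_complement:
  assumes U: "subspace U" "U \<subseteq> V" and V: "subspace V" "V \<subseteq> span F" "finite F"
  obtains C where "finite C" "span C \<subseteq> V" "span C \<inter> U = {0}"
    "\<And>v. v \<in> V \<Longrightarrow> \<exists>w\<in>span C. \<exists>u\<in>U. v = w + u" "dim (span C) + dim U = dim V"
proof -
  obtain D where D: "D \<subseteq> U" "independent D" "U \<subseteq> span D" "card D = dim U"
    using basis_exists by metis
  obtain E where E: "D \<subseteq> E" "E \<subseteq> V" "independent E" "V \<subseteq> span E"
    using maximal_independent_subset_extend[of D V] D(1,2) U(2) by blast
  have fE: "finite E" using independent_span_bound[OF V(3) E(3)] E(2) V(2) by blast
  have spanD: "span D = U" using span_subspace[OF D(1,3) U(1)] .
  have "span (E - D) \<subseteq> V" using E(2) span_minimal[OF _ V(1)] by blast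
  moreover have "span (E - D) \<inter> U = {0}"
    using span_Int_span_eq_zero[OF E(3) fE, of "E - D" D] E(1) spanD span_zero by auto
  moreover have "\<exists>w\<in>span (E - D). \<exists>u\<in>U. v = w + u" if "v \<in> V" for v
  proof -
    have "(E - D) \<union> D = E" using E(1) by blast
    then have "v \<in> span ((E - D) \<union> D)" using that E(4) by auto
    then show ?thesis unfolding span_Un spanD by blast
  qed
  moreover have "dim (span (E - D)) + dim U = dim V"
    using dim_span_eq_card_independent[OF independent_mono[OF E(3)], of "E - D"]
      basis_card_eq_dim[OF E(2,4,3)] D(4) card_Diff_subset[OF finite_subset[OF E(1) fE] E(1)]
      card_mono[OF fE E(1)]
    by simp
  ultimately show thesis using that fE by blast
qed

end

section \<open>Linear operators on \<open>P\<^sub>n\<close>\<close>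

lemma lookup_scal [simp]: "Poly_Mapping.lookup (scal c p) \<alpha> = c * Poly_Mapping.lookup p \<alpha>"
  by (simp add: scal_def Poly_Mapping.map.rep_eq when_def)

interpretation VS: vector_space "scal :: 'k::field \<Rightarrow> ('n, 'k) Pn \<Rightarrow> _"
  by unfold_locales (auto intro!: poly_mapping_eqI simp: lookup_add algebra_simps)

interpretation VSP: vector_space_pair "scal :: 'k::field \<Rightarrow> ('n, 'k) Pn \<Rightarrow> _" scal ..

abbreviation lin :: "(('n, 'k::field) Pn \<Rightarrow> ('n, 'k) Pn) \<Rightarrow> bool" where
  "lin f \<equiv> Vector_Spaces.linear scal scal f"

lemma linI:
  assumes "\<And>p q. f (p + q) = f p + f q" and "\<And>c p. f (scal c p) = scal c (f p)"
  shows "lin f"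
  unfolding Vector_Spaces.linear_iff using assms VS.vector_space_axioms by blast

lemma lookup_Xop:
  "Poly_Mapping.lookup (Xop i p) \<alpha> =
     (if 0 < \<alpha> i then Poly_Mapping.lookup p (\<alpha>(i := \<alpha> i - 1)) else 0)"
proof -
  have "{\<alpha>. (if 0 < \<alpha> i then Poly_Mapping.lookup p (\<alpha>(i := \<alpha> i - 1)) else 0) \<noteq> 0}
          \<subseteq> (\<lambda>\<beta>. \<beta>(i := Suc (\<beta> i))) ` Poly_Mapping.keys p"
  proof (intro subsetI)
    fix \<alpha> assume "\<alpha> \<in> {\<alpha>. (if 0 < \<alpha> i then Poly_Mapping.lookup p (\<alpha>(i := \<alpha> i - 1)) else 0) \<noteq> 0}"
    then show "\<alpha> \<in> (\<lambda>\<beta>. \<beta>(i := Suc (\<beta> i))) ` Poly_Mapping.keys p"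
      by (intro image_eqI[where x = "\<alpha>(i := \<alpha> i - 1)"]) (auto simp: in_keys_iff split: if_splits)
  qed
  then have "finite {\<alpha>. (if 0 < \<alpha> i then Poly_Mapping.lookup p (\<alpha>(i := \<alpha> i - 1)) else 0) \<noteq> 0}"
    by (rule finite_subset) simp
  then show ?thesis
    unfolding Xop_def by simp
qed

lemma lookup_Yop: "Poly_Mapping.lookup (Yop i p) \<alpha> = Poly_Mapping.lookup p (\<alpha>(i := Suc (\<alpha> i)))"
proof -
  have "{\<alpha>. Poly_Mapping.lookup p (\<alpha>(i := Suc (\<alpha> i))) \<noteq> 0}
          \<subseteq> (\<lambda>\<beta>. \<beta>(i := \<beta> i - 1)) ` Poly_Mapping.keys p"
  proof (intro subsetI)
    fix \<alpha> assume "\<alpha> \<in> {\<alpha>. Poly_Mapping.lookup p (\<alpha>(i := Suc (\<alpha> i))) \<noteq> 0}"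
    then show "\<alpha> \<in> (\<lambda>\<beta>. \<beta>(i := \<beta> i - 1)) ` Poly_Mapping.keys p"
      by (intro image_eqI[where x = "\<alpha>(i := Suc (\<alpha> i))"]) (auto simp: in_keys_iff)
  qed
  then have "finite {\<alpha>. Poly_Mapping.lookup p (\<alpha>(i := Suc (\<alpha> i))) \<noteq> 0}"
    by (rule finite_subset) simp
  then show ?thesis
    unfolding Yop_def by simp
qed

lemma lookup_Xop_pow:
  "Poly_Mapping.lookup ((Xop i ^^ a) p) \<alpha> =
     (if a \<le> \<alpha> i then Poly_Mapping.lookup p (\<alpha>(i := \<alpha> i - a)) else 0)"
  by (induction a arbitrary: \<alpha>)
     (auto simp: lookup_Xop fun_upd_def intro!: arg_cong[where f = "Poly_Mapping.lookup p"])

lemma lookup_Yop_pow: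
  "Poly_Mapping.lookup ((Yop i ^^ b) p) \<alpha> = Poly_Mapping.lookup p (\<alpha>(i := \<alpha> i + b))"
  by (induction b arbitrary: \<alpha>)
     (auto simp: lookup_Yop fun_upd_def intro!: arg_cong[where f = "Poly_Mapping.lookup p"])

lemma lookup_Ffactor:
  "Poly_Mapping.lookup (Ffactor i a b p) \<gamma> =
     (if \<gamma> i = a then Poly_Mapping.lookup p (\<gamma>(i := b)) else 0)"
  unfolding Ffactor_def lookup_minus lookup_Xop_pow lookup_Yop_pow
  by (auto simp: fun_upd_def fun_eq_iff intro!: arg_cong[where f = "Poly_Mapping.lookup p"])

lemma Ffactor_commute:
  "i \<noteq> j \<Longrightarrow> Ffactor i a b (Ffactor j c d p) = Ffactor j c d (Ffactor i a b p)"
  by (rule poly_mapping_eqI) (auto simp: lookup_Ffactor fun_upd_twist)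

lemma comp_fun_commute_Ffactor: "comp_fun_commute (\<lambda>i f. Ffactor i (\<alpha> i) (\<beta> i) \<circ> f)"
proof
  fix x y
  show "(\<lambda>f. Ffactor y (\<alpha> y) (\<beta> y) \<circ> f) \<circ> (\<lambda>f. Ffactor x (\<alpha> x) (\<beta> x) \<circ> f) =
        (\<lambda>f. Ffactor x (\<alpha> x) (\<beta> x) \<circ> f) \<circ> (\<lambda>f. Ffactor y (\<alpha> y) (\<beta> y) \<circ> f)"
    by (cases "x = y") (simp_all add: fun_eq_iff Ffactor_commute)
qed

lemma lookup_fold_Ffactor:
  assumes "finite S"
  shows "Poly_Mapping.lookup (Finite_Set.fold (\<lambda>i f. Ffactor i (\<alpha> i) (\<beta> i) \<circ> f) id S p) \<gamma> =
     (if \<forall>i\<in>S. \<gamma> i = \<alpha> i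
      then Poly_Mapping.lookup p (\<lambda>j. if j \<in> S then \<beta> j else \<gamma> j) else 0)"
  using assms
proof (induction S arbitrary: \<gamma> rule: finite_induct)
  case empty
  then show ?case by simp
next
  case (insert x A)
  interpret comp_fun_commute "\<lambda>i f. Ffactor i (\<alpha> i) (\<beta> i) \<circ> f"
    by (rule comp_fun_commute_Ffactor)
  have fold_eq: "Finite_Set.fold (\<lambda>i f. Ffactor i (\<alpha> i) (\<beta> i) \<circ> f) id (insert x A) p =
        Ffactor x (\<alpha> x) (\<beta> x) (Finite_Set.fold (\<lambda>i f. Ffactor i (\<alpha> i) (\<beta> i) \<circ> f) id A p)"
    using insert.hyps by (simp add: fold_insert)
  have "(\<lambda>j. if j \<in> A then \<beta> j else (\<gamma>(x := \<beta> x)) j) =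
        (\<lambda>j. if j \<in> insert x A then \<beta> j else \<gamma> j)"
    using insert.hyps by (auto simp: fun_eq_iff)
  then show ?case
    unfolding fold_eq lookup_Ffactor insert.IH using insert.hyps by auto
qed

lemma Fgen_apply: "Fgen \<alpha> \<beta> p = Poly_Mapping.single \<alpha> (Poly_Mapping.lookup p \<beta>)"
  by (rule poly_mapping_eqI)
     (auto simp: Fgen_def lookup_fold_Ffactor lookup_single when_def fun_eq_iff)

lemma linear_Xop: "lin (Xop i)"
  by (rule linI; rule poly_mapping_eqI) (simp_all add: lookup_Xop lookup_add)

lemma linear_Yop: "lin (Yop i)"
  by (rule linI; rule poly_mapping_eqI) (simp_all add: lookup_Yop lookup_add)

lemma linear_Sn: "f \<in> Sn \<Longrightarrow> lin f"
proof (induction rule: Sn.induct)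
  case (Sn_scal f c)
  then show ?case using Vector_Spaces.linear_compose[OF _ VS.linear_scale_self] by (simp add: comp_def)
next
  case (Sn_comp f g)
  then show ?case using Vector_Spaces.linear_compose by blast
qed (simp_all add: VS.linear_id VS.linear_ident linear_Xop linear_Yop VSP.linear_compose_add)

section \<open>Finitely determined operators\<close>

definition restrict_keys :: "('n \<Rightarrow> nat) set \<Rightarrow> ('n, 'k::field) Pn \<Rightarrow> ('n, 'k) Pn" where
  "restrict_keys N p = (\<Sum>\<alpha>\<in>N. scal (Poly_Mapping.lookup p \<alpha>) (Poly_Mapping.single \<alpha> 1))"

definition polys_on :: "('n \<Rightarrow> nat) set \<Rightarrow> ('n, 'k::field) Pn set" where
  "polys_on N = {p. Poly_Mapping.keys p \<subseteq> N}"

lemma lookup_restrict_keys: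
  "finite N \<Longrightarrow> Poly_Mapping.lookup (restrict_keys N p) \<beta> =
     (if \<beta> \<in> N then Poly_Mapping.lookup p \<beta> else 0)"
  unfolding restrict_keys_def lookup_sum
  by (simp add: lookup_single when_def if_distrib[of "\<lambda>x. _ * x"] sum.delta' cong: if_cong)

lemma restrict_keys_restrict_keys:
  "finite N \<Longrightarrow> M \<subseteq> N \<Longrightarrow> restrict_keys M (restrict_keys N p) = restrict_keys M p"
  unfolding restrict_keys_def[of M] by (intro sum.cong refl) (auto simp: lookup_restrict_keys)

lemma restrict_keys_superset_invariant:
  assumes "finite N" "M \<subseteq> N" "\<And>p. f (restrict_keys M p) = f p"
  shows "f (restrict_keys N p) = f p"
  by (metis assms restrict_keys_restrict_keys)

lemma restrict_keys_in_polys_on: "finite N \<Longrightarrow> restrict_keys N p \<in> polys_on N"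
  by (auto simp: polys_on_def in_keys_iff lookup_restrict_keys split: if_splits)

lemma restrict_keys_eq_self: "finite N \<Longrightarrow> p \<in> polys_on N \<Longrightarrow> restrict_keys N p = p"
  by (rule poly_mapping_eqI) (auto simp: polys_on_def in_keys_iff lookup_restrict_keys)

lemma restrict_keys_diff_self: "finite N \<Longrightarrow> restrict_keys N (p - restrict_keys N p) = 0"
  by (rule poly_mapping_eqI) (simp add: lookup_restrict_keys lookup_minus)

lemma subspace_polys_on: "VS.subspace (polys_on N)"
  unfolding VS.subspace_def polys_on_def
  by (auto simp: in_keys_iff lookup_add) (metis add.right_neutral in_keys_iff subsetD)

lemma polys_on_subset_span:
  assumes "finite N"
  shows "polys_on N \<subseteq> VS.span ((\<lambda>\<alpha>. Poly_Mapping.single \<alpha> 1) ` N)"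
proof
  fix p assume "p \<in> polys_on N"
  then have "p = restrict_keys N p" using restrict_keys_eq_self[OF assms] by metis
  also have "\<dots> \<in> VS.span ((\<lambda>\<alpha>. Poly_Mapping.single \<alpha> 1) ` N)"
    unfolding restrict_keys_def by (intro VS.span_sum VS.span_scale VS.span_base) auto
  finally show "p \<in> VS.span ((\<lambda>\<alpha>. Poly_Mapping.single \<alpha> 1) ` N)" .
qed

definition finitely_determined :: "(('n, 'k::field) Pn \<Rightarrow> ('n, 'k) Pn) \<Rightarrow> bool" where
  "finitely_determined f \<longleftrightarrow> (\<exists>M. finite M \<and> (\<forall>p. f (restrict_keys M p) = f p))"

lemma scal_single: "scal c (Poly_Mapping.single \<alpha> x) = Poly_Mapping.single \<alpha> (c * x)"
  by (rule poly_mapping_eqI) (simp add: lookup_single when_def)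

lemma linear_finitely_determined_Fn:
  fixes f :: "('n::finite, 'k::field) Pn \<Rightarrow> ('n, 'k) Pn"
  assumes "f \<in> Fn"
  shows "lin f \<and> finitely_determined f"
  using assms
proof (induction rule: Fn.induct)
  case Fn_zero
  show ?case by (auto simp: finitely_determined_def intro: linI)
next
  case (Fn_gen \<alpha> \<beta>)
  have "lin (Fgen \<alpha> \<beta> :: ('n, 'k) Pn \<Rightarrow> _)"
    by (rule linI) (simp_all add: Fgen_apply lookup_add single_add scal_single)
  moreover have "Fgen \<alpha> \<beta> (restrict_keys {\<beta>} p) = Fgen \<alpha> \<beta> p" for p :: "('n, 'k) Pn"
    by (simp add: Fgen_apply lookup_restrict_keys)
  ultimately show ?case unfolding finitely_determined_def by blast
next
  case (Fn_add f g)
  then obtain M1 M2 where M: "finite M1" "\<And>p. f (restrict_keys M1 p) = f p"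
    "finite M2" "\<And>p. g (restrict_keys M2 p) = g p"
    unfolding finitely_determined_def by blast
  have "finite (M1 \<union> M2)" using M by simp
  then have "f (restrict_keys (M1 \<union> M2) p) + g (restrict_keys (M1 \<union> M2) p) = f p + g p" for p
    using restrict_keys_superset_invariant[of "M1 \<union> M2"] M by (metis sup_ge1 sup_ge2)
  then show ?case
    using Fn_add \<open>finite (M1 \<union> M2)\<close> VSP.linear_compose_add unfolding finitely_determined_def by blast
next
  case (Fn_scal f c)
  then show ?case using Vector_Spaces.linear_compose[OF _ VS.linear_scale_self]
    by (auto simp: finitely_determined_def comp_def)
qed

lemma linear_finitely_determined_confined:
  fixes g :: "('n, 'k::field) Pn \<Rightarrow> ('n, 'k) Pn"
  assumes "lin g" and "finitely_determined g"
  obtains N where "finite N" "\<And>p. g (restrict_keys N p) = g p" "\<And>p. g p \<in> polys_on N"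
proof -
  interpret g: Vector_Spaces.linear scal scal g by fact
  obtain M where M: "finite M" "\<And>p. g (restrict_keys M p) = g p"
    using assms(2) unfolding finitely_determined_def by blast
  define N where "N = M \<union> (\<Union>\<alpha>\<in>M. Poly_Mapping.keys (g (Poly_Mapping.single \<alpha> 1)))"
  have N: "finite N" using M(1) by (simp add: N_def)
  have "g p \<in> polys_on N" for p
  proof -
    have "restrict_keys M p \<in> VS.span ((\<lambda>\<alpha>. Poly_Mapping.single \<alpha> 1) ` M)"
      using polys_on_subset_span[OF M(1)] restrict_keys_in_polys_on[OF M(1)] by blast
    then have "g p \<in> VS.span (g ` (\<lambda>\<alpha>. Poly_Mapping.single \<alpha> 1) ` M)"
      using g.span_image M(2) by (metis image_eqI)
    also have "\<dots> \<subseteq> polys_on N"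
      by (rule VS.span_minimal[OF _ subspace_polys_on]) (auto simp: polys_on_def N_def)
    finally show ?thesis .
  qed
  moreover have "g (restrict_keys N p) = g p" for p
    using restrict_keys_superset_invariant[of N M g] N M(2) by (simp add: N_def)
  ultimately show thesis using N that by blast
qed

section \<open>Operators of index zero\<close>

lemma dim_coker_eq:
  assumes "lin \<phi>" and "is_coker_compl \<phi> W"
  shows "dim_coker \<phi> = VS.dim W"
proof -
  have decomp: "\<exists>w\<in>W'. \<exists>r\<in>range \<phi>. p = w + r" if "is_coker_compl \<phi> W'" for W' p
    using that unfolding is_coker_compl_def by blast
  have "is_coker_compl \<phi> (SOME W. is_coker_compl \<phi> W)"
    using assms(2) by (rule someI)
  then have "VS.dim (SOME W. is_coker_compl \<phi> W) = VS.dim W"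
    using VS.complement_dim_eq[OF VSP.linear_subspace_image[OF assms(1) VS.subspace_UNIV]]
      decomp assms(2) unfolding is_coker_compl_def by blast
  then show ?thesis unfolding dim_coker_def .
qed

lemma C0I:
  assumes "lin \<phi>" "fin_dim (ker \<phi>)" "is_coker_compl \<phi> W" "fin_dim W"
    and "VS.dim W = VS.dim (ker \<phi>)"
  shows "\<phi> \<in> C0"
  using assms dim_coker_eq[OF assms(1,3)] unfolding C0_def dim_ker_def by auto

lemma C0_comp_invertible:
  assumes "\<phi> \<in> C0" and "lin u" and "bij u"
  shows "u \<circ> \<phi> \<in> C0"
proof -
  interpret u: Vector_Spaces.linear scal scal u by fact
  obtain W where W: "is_coker_compl \<phi> W" "fin_dim W" and lin: "lin \<phi>"
    and ker_fin: "fin_dim (ker \<phi>)" and index: "dim_coker \<phi> = dim_ker \<phi>"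
    using assms(1) unfolding C0_def by auto
  have inj: "inj u" and surj: "surj u" using assms(3) bij_is_inj bij_is_surj by blast+
  have u_eq_0: "u y = 0 \<longleftrightarrow> y = 0" for y
    using inj u.zero by (metis inj_eq)
  then have ker: "ker (u \<circ> \<phi>) = ker \<phi>" by (simp add: ker_def)
  have "is_coker_compl (u \<circ> \<phi>) (u ` W)"
    unfolding is_coker_compl_def
  proof (intro conjI allI)
    show "VS.subspace (u ` W)" using W(1) u.subspace_image unfolding is_coker_compl_def by blast
    have "u ` W \<inter> range (u \<circ> \<phi>) = u ` (W \<inter> range \<phi>)"
      using inj by (simp add: image_Int image_comp)
    then show "u ` W \<inter> range (u \<circ> \<phi>) = {0}"
      using W(1) u.zero unfolding is_coker_compl_def by simp
    fix p
    obtain p' where "p = u p'" using surj by blast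
    moreover obtain w q where "w \<in> W" "p' = w + \<phi> q" using W(1) unfolding is_coker_compl_def by blast
    ultimately show "\<exists>w\<in>u ` W. \<exists>q. p = w + (u \<circ> \<phi>) q" by (auto simp: u.add)
  qed
  moreover have "fin_dim (u ` W)"
    using W(2) u.span_image unfolding fin_dim_def by blast
  moreover have "VS.dim (u ` W) = VS.dim (ker (u \<circ> \<phi>))"
    using VS.dim_image_eq_inj[OF assms(2) inj_on_subset[OF inj]] index dim_coker_eq[OF lin W(1)]
    unfolding ker dim_ker_def by simp
  moreover have "fin_dim (ker (u \<circ> \<phi>))" using ker ker_fin by simp
  ultimately show ?thesis
    by (intro C0I[OF Vector_Spaces.linear_compose[OF lin assms(2)]])
qed

locale confined_perturbation =
  fixes N :: "('n \<Rightarrow> nat) set" and g :: "('n, 'k::field) Pn \<Rightarrow> ('n, 'k) Pn"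
  assumes finite_N: "finite N" and linear_g: "lin g"
    and g_restrict_keys: "\<And>p. g (restrict_keys N p) = g p"
    and g_polys_on: "\<And>p. g p \<in> polys_on N"
begin

abbreviation h :: "('n, 'k) Pn \<Rightarrow> ('n, 'k) Pn" where
  "h \<equiv> \<lambda>p. p + g p"

lemma linear_h: "lin h"
  using VSP.linear_compose_add[OF VS.linear_ident linear_g] .

lemma h_polys_on: "p \<in> polys_on N \<Longrightarrow> h p \<in> polys_on N"
  using VS.subspace_add[OF subspace_polys_on] g_polys_on by blast

lemma h_diff_restrict_keys: "h (p - restrict_keys N p) = p - restrict_keys N p"
proof -
  have "g (p - restrict_keys N p) = 0"
    using g_restrict_keys[of "p - restrict_keys N p"] restrict_keys_diff_self[OF finite_N]
      VSP.linear_0[OF linear_g] by metis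
  then show ?thesis by simp
qed

lemma ker_h_subset: "ker h \<subseteq> polys_on N"
proof
  fix p assume "p \<in> ker h"
  then have "p = - g p" by (simp add: ker_def eq_neg_iff_add_eq_0)
  then show "p \<in> polys_on N" using VS.subspace_neg[OF subspace_polys_on g_polys_on] by metis
qed

text \<open>Off \<open>polys_on N\<close> the map \<open>h\<close> is the identity, so a complement of \<open>h\<close>'s image inside the
  finite-dimensional space \<open>polys_on N\<close> is already a complement of its whole image.\<close>

lemma is_coker_compl_h:
  assumes W: "VS.subspace W" "W \<subseteq> polys_on N" "W \<inter> h ` polys_on N = {0}"
    and decomp: "\<And>v. v \<in> polys_on N \<Longrightarrow> \<exists>w\<in>W. \<exists>u\<in>h ` polys_on N. v = w + u"
  shows "is_coker_compl h W"
  unfolding is_coker_compl_def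
proof (intro conjI allI)
  show "VS.subspace W" by (fact W(1))
  have split: "h q = h (restrict_keys N q) + (q - restrict_keys N q)" for q
    using VSP.linear_add[OF linear_h, of "restrict_keys N q" "q - restrict_keys N q"]
      h_diff_restrict_keys[of q] by simp
  show "W \<inter> range h = {0}"
  proof (intro equalityI subsetI)
    fix w assume "w \<in> W \<inter> range h"
    then obtain q where w: "w \<in> W" "w = h q" by blast
    have "q - restrict_keys N q = w - h (restrict_keys N q)" using split[of q] w(2) by simp
    also have "\<dots> \<in> polys_on N"
      using W(2) w(1) h_polys_on restrict_keys_in_polys_on[OF finite_N]
      by (blast intro: VS.subspace_diff[OF subspace_polys_on])
    finally have "q - restrict_keys N q = 0"
      using restrict_keys_eq_self[OF finite_N] restrict_keys_diff_self[OF finite_N] by metis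
    then have "w = h (restrict_keys N q)" using split[of q] w(2) by simp
    then have "w \<in> W \<inter> h ` polys_on N" using w(1) restrict_keys_in_polys_on[OF finite_N] by blast
    then show "w \<in> {0}" using W(3) by blast
  qed (use W(1) VSP.linear_0[OF linear_h] in \<open>auto simp: VS.subspace_0 intro: range_eqI[of _ _ 0]\<close>)
  fix p
  obtain w u where "w \<in> W" "u \<in> polys_on N" "restrict_keys N p = w + h u"
    using decomp[OF restrict_keys_in_polys_on[OF finite_N]] by blast
  have "p = restrict_keys N p + (p - restrict_keys N p)" by simp
  also have "\<dots> = w + h u + h (p - restrict_keys N p)"
    using h_diff_restrict_keys[of p] \<open>restrict_keys N p = w + h u\<close> by metis
  also have "\<dots> = w + h (u + (p - restrict_keys N p))"
    using VSP.linear_add[OF linear_h, of u "p - restrict_keys N p"] by (simp only: add.assoc)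
  finally have "p = w + h (u + (p - restrict_keys N p))" .
  then show "\<exists>w\<in>W. \<exists>q. p = w + h q" using \<open>w \<in> W\<close> by blast
qed

lemma h_in_C0: "h \<in> C0"
proof -
  let ?V = "polys_on N :: ('n, 'k) Pn set" and ?F = "(\<lambda>\<alpha>. Poly_Mapping.single \<alpha> (1::'k)) ` N"
  have V: "VS.subspace ?V" "?V \<subseteq> VS.span ?F" "finite ?F"
    using subspace_polys_on polys_on_subset_span[OF finite_N] finite_N by auto
  have image: "VS.subspace (h ` ?V)" "h ` ?V \<subseteq> ?V"
    using VSP.linear_subspace_image[OF linear_h V(1)] h_polys_on by auto
  have ker_eq: "?V \<inter> {x. h x = 0} = ker h" using ker_h_subset by (auto simp: ker_def)
  have rank_nullity: "VS.dim (h ` ?V) + VS.dim (ker h) = VS.dim ?V"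
    using VS.rank_nullity[OF V linear_h] unfolding ker_eq .
  have "ker h \<subseteq> VS.span ?F" using ker_h_subset V(2) by (rule order_trans)
  then obtain B where "finite B" "VS.span B = ker h"
    by (rule VS.subspace_finite_span[OF VSP.linear_subspace_kernel[OF linear_h, folded ker_def] _ V(3)])
  then have ker_fin: "fin_dim (ker h)" unfolding fin_dim_def by blast
  show ?thesis
  proof (rule VS.exists_complement[OF image V])
    fix C assume C: "finite C" "VS.span C \<subseteq> ?V" "VS.span C \<inter> h ` ?V = {0}"
      "\<And>v. v \<in> ?V \<Longrightarrow> \<exists>w\<in>VS.span C. \<exists>u\<in>h ` ?V. v = w + u"
      "VS.dim (VS.span C) + VS.dim (h ` ?V) = VS.dim ?V"
    have "fin_dim (VS.span C)" using C(1) unfolding fin_dim_def by blast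
    moreover have "VS.dim (VS.span C) = VS.dim (ker h)" using C(5) rank_nullity by linarith
    ultimately show ?thesis
      using C0I[OF linear_h ker_fin is_coker_compl_h[OF VS.subspace_span C(2-4)]] by blast
  qed
qed

end

lemma id_plus_in_C0:
  assumes "lin g" and "finitely_determined g"
  shows "(\<lambda>p. p + g p) \<in> C0"
proof -
  obtain N where "finite N" "\<And>p. g (restrict_keys N p) = g p" "\<And>p. g p \<in> polys_on N"
    using linear_finitely_determined_confined[OF assms] by blast
  with assms(1) interpret confined_perturbation N g
    by (simp add: confined_perturbation_def)
  show ?thesis by (fact h_in_C0)
qed

theorem corollary3p5:
  fixes dummy :: "('n::finite, 'k::field_char_0) Pn"
  shows "(\<forall>f \<in> (Fn :: (('n, 'k) Pn \<Rightarrow> ('n, 'k) Pn) set). (\<lambda>p. p + f p) \<in> C0)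
       \<and> (\<forall>u \<in> (Sn_units :: (('n, 'k) Pn \<Rightarrow> ('n, 'k) Pn) set). \<forall>f \<in> Fn. (\<lambda>p. u p + f p) \<in> C0)"
proof (intro conjI ballI)
  fix f :: "('n, 'k) Pn \<Rightarrow> ('n, 'k) Pn" assume "f \<in> Fn"
  then show "(\<lambda>p. p + f p) \<in> C0"
    using linear_finitely_determined_Fn id_plus_in_C0 by blast
next
  fix u f :: "('n, 'k) Pn \<Rightarrow> ('n, 'k) Pn" assume "u \<in> Sn_units" and "f \<in> Fn"
  then obtain v where "u \<in> Sn" "v \<in> Sn" and uv: "u \<circ> v = id" "v \<circ> u = id"
    unfolding Sn_units_def by blast
  then have u: "lin u" "bij u" and v: "lin v" using linear_Sn o_bij[OF uv(2,1)] by blast+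
  obtain M where f: "lin f" "finite M" "\<And>p. f (restrict_keys M p) = f p"
    using linear_finitely_determined_Fn[OF \<open>f \<in> Fn\<close>] unfolding finitely_determined_def by blast
  have "finitely_determined (v \<circ> f)"
    unfolding finitely_determined_def using f(2,3) by (intro exI[of _ M]) simp
  then have "(\<lambda>p. p + (v \<circ> f) p) \<in> C0"
    by (rule id_plus_in_C0[OF Vector_Spaces.linear_compose[OF f(1) v]])
  then have "u \<circ> (\<lambda>p. p + (v \<circ> f) p) \<in> C0"
    by (rule C0_comp_invertible[OF _ u])
  moreover have "u \<circ> (\<lambda>p. p + (v \<circ> f) p) = (\<lambda>p. u p + f p)"
    using VSP.linear_add[OF u(1)] pointfree_idE[OF uv(1)] by (simp add: fun_eq_iff)
  ultimately show "(\<lambda>p. u p + f p) \<in> C0" by simp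
qed

end
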